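(* Let $L$ and ${}^*L=e^{\sigma(x)}L+\beta$ be as in the context and $\tau=e^{\sigma}\,{}^*L/L$. Then $${}^*c^2=\tau^{-1}\Big[c^2+\frac{n+1}{{}^*L}A_\beta\Big].$$
   Context: $M$ is a smooth manifold of dimension $n$ with local coordinates $(x^i)$ and induced fiber coordinates $(y^i)$ on $TM$. $L(x,y)$ is a Finsler metric: positive and smooth for $y\neq0$, positively homogeneous of degree 1 in $y$, with positive definite fundamental tensor $g_{ij}=\frac12\frac{\partial^2L^2}{\partial y^i\partial y^j}$ and inverse $g^{ij}$. $\sigma(x)$ is a smooth function on $M$ and $\beta(x,y)=b_i(x)y^i$ is a 1-form; the conformal $\beta$-change is ${}^*L=e^{\sigma(x)}L+\beta$, assumed to be again a Finsler metric. Notation: $l_i=\partial L/\partial y^i$, $l^i=g^{ij}l_j$, $c_{ijk}=\frac12\partial g_{ij}/\partial y^k$, $c_i=g^{jk}c_{ijk}$, $c^i=g^{ij}c_j$, $c^2=c_ic^i$, $b^i=g^{ij}b_j$, $m_i=b_i-\frac{\beta}{L}l_i$, $m^i=g^{ij}m_j$, $m^2=m_im^i$, $c_\beta=c_ib^i$, $A_\beta=c_\beta+\frac{n+1}{4\,{}^*L}m^2$. Quantities built from ${}^*L$ by the same formulas (using ${}^*g_{ij}$ and its inverse ${}^*g^{ij}$) are denoted with a left asterisk; in particular ${}^*c^2={}^*c_i\,{}^*g^{ij}\,{}^*c_j$. *)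

theory Defs
  imports "HOL-Analysis.Analysis"
begin

text \<open>Local-chart model: the coordinate domain is an open set U of R^n
  (points x :: real^'n), fibre coordinates y :: real^'n, n = CARD('n).
  A Finsler metric is a function L x y.\<close>

definition dd :: "'a::real_normed_vector \<Rightarrow> ('a \<Rightarrow> real) \<Rightarrow> 'a \<Rightarrow> real" where
  "dd v f z = deriv (\<lambda>t. f (z + t *\<^sub>R v)) 0"

fun Ck :: "nat \<Rightarrow> 'a::euclidean_space set \<Rightarrow> ('a \<Rightarrow> real) \<Rightarrow> bool" where
  "Ck 0 S f = continuous_on S f"
| "Ck (Suc k) S f = (f differentiable_on S \<and> (\<forall>b\<in>Basis. Ck k S (dd b f)))"

definition smooth_on :: "'a::euclidean_space set \<Rightarrow> ('a \<Rightarrow> real) \<Rightarrow> bool" where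
  "smooth_on S f = (\<forall>k. Ck k S f)"

definition pdy :: "'n::finite \<Rightarrow> (real^'n \<Rightarrow> real) \<Rightarrow> real^'n \<Rightarrow> real" where
  "pdy i f y = dd (axis i 1) f y"

definition gt :: "(real^'n \<Rightarrow> real^'n \<Rightarrow> real) \<Rightarrow> real^'n \<Rightarrow> real^'n \<Rightarrow> 'n::finite \<Rightarrow> 'n \<Rightarrow> real" where
  "gt L x y i j = (1/2) * pdy i (pdy j (\<lambda>v. (L x v)^2)) y"

definition gmat :: "(real^'n \<Rightarrow> real^'n \<Rightarrow> real) \<Rightarrow> real^'n \<Rightarrow> real^'n \<Rightarrow> real^'n^'n::finite" where
  "gmat L x y = (\<chi> i j. gt L x y i j)"

definition ginv :: "(real^'n \<Rightarrow> real^'n \<Rightarrow> real) \<Rightarrow> real^'n \<Rightarrow> real^'n \<Rightarrow> 'n::finite \<Rightarrow> 'n \<Rightarrow> real" where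
  "ginv L x y i j = matrix_inv (gmat L x y) $ i $ j"

definition ct :: "(real^'n \<Rightarrow> real^'n \<Rightarrow> real) \<Rightarrow> real^'n \<Rightarrow> real^'n \<Rightarrow> 'n::finite \<Rightarrow> 'n \<Rightarrow> 'n \<Rightarrow> real" where
  "ct L x y i j k = (1/2) * pdy k (\<lambda>v. gt L x v i j) y"

definition cvec :: "(real^'n \<Rightarrow> real^'n \<Rightarrow> real) \<Rightarrow> real^'n \<Rightarrow> real^'n \<Rightarrow> 'n::finite \<Rightarrow> real" where
  "cvec L x y i = (\<Sum>j\<in>UNIV. \<Sum>k\<in>UNIV. ginv L x y j k * ct L x y i j k)"

definition csq :: "(real^'n \<Rightarrow> real^'n \<Rightarrow> real) \<Rightarrow> real^'n \<Rightarrow> real^'n::finite \<Rightarrow> real" where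
  "csq L x y = (\<Sum>i\<in>UNIV. \<Sum>j\<in>UNIV. cvec L x y i * ginv L x y i j * cvec L x y j)"

definition finsler :: "(real^'n::finite) set \<Rightarrow> (real^'n \<Rightarrow> real^'n \<Rightarrow> real) \<Rightarrow> bool" where
  "finsler U L \<longleftrightarrow>
     smooth_on (U \<times> (UNIV - {0})) (\<lambda>(x, y). L x y) \<and>
     (\<forall>x\<in>U. \<forall>y. y \<noteq> 0 \<longrightarrow> L x y > 0) \<and>
     (\<forall>x\<in>U. \<forall>y. \<forall>t>0. L x (t *\<^sub>R y) = t * L x y) \<and>
     (\<forall>x\<in>U. \<forall>y. y \<noteq> 0 \<longrightarrow>
        (\<forall>v. v \<noteq> 0 \<longrightarrow> (\<Sum>i\<in>UNIV. \<Sum>j\<in>UNIV. gt L x y i j * v$i * v$j) > 0))"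

definition betaf :: "(real^'n \<Rightarrow> real^'n) \<Rightarrow> real^'n \<Rightarrow> real^'n::finite \<Rightarrow> real" where
  "betaf b x y = (\<Sum>i\<in>UNIV. b x $ i * y $ i)"

definition conf_beta :: "(real^'n \<Rightarrow> real) \<Rightarrow> (real^'n \<Rightarrow> real^'n) \<Rightarrow> (real^'n \<Rightarrow> real^'n \<Rightarrow> real)
   \<Rightarrow> real^'n \<Rightarrow> real^'n::finite \<Rightarrow> real" where
  "conf_beta \<sigma> b L x y = exp (\<sigma> x) * L x y + betaf b x y"

definition mvec :: "(real^'n \<Rightarrow> real^'n) \<Rightarrow> (real^'n \<Rightarrow> real^'n \<Rightarrow> real) \<Rightarrow> real^'n \<Rightarrow> real^'n \<Rightarrow> 'n::finite \<Rightarrow> real" where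
  "mvec b L x y i = b x $ i - betaf b x y / L x y * pdy i (L x) y"

definition msq :: "(real^'n \<Rightarrow> real^'n) \<Rightarrow> (real^'n \<Rightarrow> real^'n \<Rightarrow> real) \<Rightarrow> real^'n \<Rightarrow> real^'n::finite \<Rightarrow> real" where
  "msq b L x y = (\<Sum>i\<in>UNIV. \<Sum>j\<in>UNIV. ginv L x y i j * mvec b L x y i * mvec b L x y j)"

definition cbeta :: "(real^'n \<Rightarrow> real^'n) \<Rightarrow> (real^'n \<Rightarrow> real^'n \<Rightarrow> real) \<Rightarrow> real^'n \<Rightarrow> real^'n::finite \<Rightarrow> real" where
  "cbeta b L x y = (\<Sum>i\<in>UNIV. \<Sum>j\<in>UNIV. cvec L x y i * ginv L x y i j * b x $ j)"

definition Abeta :: "(real^'n \<Rightarrow> real) \<Rightarrow> (real^'n \<Rightarrow> real^'n) \<Rightarrow> (real^'n \<Rightarrow> real^'n \<Rightarrow> real)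
   \<Rightarrow> real^'n \<Rightarrow> real^'n::finite \<Rightarrow> real" where
  "Abeta \<sigma> b L x y = cbeta b L x y
     + (real CARD('n) + 1) / (4 * conf_beta \<sigma> b L x y) * msq b L x y"

end

theory Submission
  imports Defs
begin

(* Fix x and let F = L(x,-), e = exp (sigma x), so that *F = e F + beta with beta linear in y.
  Euler's relations for the 1-homogeneous F give g = l l^T + F H, where l is the y-gradient and
  the y-Hessian H annihilates y. Adding a linear function changes only the gradient, to
  *l = e l + b, so *g = *l *l^T + e *F H. This rank-two perturbation of tau g can be inverted
  explicitly: *g^ij is tau^-1 g^ij plus multiples of y^i y^j and y^i m^j + m^i y^j. Likewise
  *C_ijk = tau C_ijk + (e/2) (H_ki m_j + H_kj m_i + H_ij m_k), and contracting with *g^jk gives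
  *c_i = c_i + (n+1)/(2 *F) m_i. Both c_i and m_i annihilate y, so only the tau^-1 g^ij part of
  *g^ij survives in *c^2 = *c_i *g^ij *c_j; expanding the square, with c_i b^i = c_i m^i, gives
  the formula. *)

section \<open>Partial derivatives in the fibre coordinates\<close>

lemma dd_eq_derivative:
  fixes f :: "'a::real_normed_vector \<Rightarrow> real"
  assumes "(f has_derivative D) (at v)"
  shows "dd w f v = D w"
proof -
  have lin: "linear D" using assms has_derivative_linear by blast
  have "((\<lambda>t. v + t *\<^sub>R w) has_derivative (\<lambda>t. t *\<^sub>R w)) (at 0)"
    by (auto intro!: derivative_eq_intros)
  then have "((\<lambda>t. f (v + t *\<^sub>R w)) has_derivative (\<lambda>t. D (t *\<^sub>R w))) (at 0)"
    using has_derivative_compose[of "\<lambda>t. v + t *\<^sub>R w" _ 0 UNIV f D] assms by simp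
  then have "((\<lambda>t. f (v + t *\<^sub>R w)) has_real_derivative D w) (at 0)"
    by (rule has_derivative_imp_has_field_derivative) (simp add: linear_scale[OF lin])
  then show ?thesis unfolding dd_def by (rule DERIV_imp_deriv)
qed

lemma has_real_derivative_along_line:
  fixes f :: "'a::real_normed_vector \<Rightarrow> real"
  assumes "f differentiable at (z + s *\<^sub>R a)"
  shows "((\<lambda>s. f (z + s *\<^sub>R a)) has_real_derivative dd a f (z + s *\<^sub>R a)) (at s)"
proof -
  let ?D = "frechet_derivative f (at (z + s *\<^sub>R a))"
  have D: "(f has_derivative ?D) (at (z + s *\<^sub>R a))"
    using assms frechet_derivative_works by blast
  have "((\<lambda>s. z + s *\<^sub>R a) has_derivative (\<lambda>t. t *\<^sub>R a)) (at s)"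
    by (auto intro!: derivative_eq_intros)
  then have "((\<lambda>s. f (z + s *\<^sub>R a)) has_derivative (\<lambda>t. ?D (t *\<^sub>R a))) (at s)"
    using has_derivative_compose[of "\<lambda>s. z + s *\<^sub>R a" _ s UNIV f ?D] D by simp
  then show ?thesis unfolding dd_eq_derivative[OF D]
    by (rule has_derivative_imp_has_field_derivative)
       (simp add: linear_scale[OF has_derivative_linear[OF D]])
qed

lemma pdy_eq_derivative:
  fixes f :: "real^'n \<Rightarrow> real"
  assumes "(f has_derivative D) (at v)"
  shows "pdy j f v = D (axis j 1)"
  unfolding pdy_def using assms by (rule dd_eq_derivative)

lemma has_derivative_pdy:
  fixes f :: "real^'n \<Rightarrow> real"
  assumes "f differentiable at v"
  shows "(f has_derivative (\<lambda>w. \<Sum>i\<in>UNIV. w$i * pdy i f v)) (at v)"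
proof -
  let ?D = "frechet_derivative f (at v)"
  have D: "(f has_derivative ?D) (at v)" using assms frechet_derivative_works by blast
  have lin: "linear ?D" using D has_derivative_linear by blast
  have "?D w = (\<Sum>i\<in>UNIV. w$i * pdy i f v)" for w
  proof -
    have "?D w = ?D (\<Sum>i\<in>UNIV. w$i *\<^sub>R axis i 1)"
      using basis_expansion[of w] by (simp add: scalar_mult_eq_scaleR)
    also have "\<dots> = (\<Sum>i\<in>UNIV. w$i * pdy i f v)"
      by (simp add: linear_sum[OF lin] linear_scale[OF lin] pdy_eq_derivative[OF D])
    finally show ?thesis .
  qed
  then have "?D = (\<lambda>w. \<Sum>i\<in>UNIV. w$i * pdy i f v)" by (rule ext)
  with D show ?thesis by simp
qed

lemma pdy_cong_open:
  fixes f g :: "real^'n \<Rightarrow> real"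
  assumes "open S" "v \<in> S" "\<And>u. u \<in> S \<Longrightarrow> f u = g u" "g differentiable at v"
  shows "pdy k f v = pdy k g v"
proof -
  have "(g has_derivative frechet_derivative g (at v)) (at v)"
    using assms(4) frechet_derivative_works by blast
  moreover have "(f has_derivative frechet_derivative g (at v)) (at v)"
    using has_derivative_transform_within_open[OF calculation assms(1,2)] assms(3) by simp
  ultimately show ?thesis by (simp add: pdy_eq_derivative)
qed

lemma sum_axis_mult: "(\<Sum>i\<in>UNIV. (axis j 1 :: real^'n) $ i * c i) = (c j :: real)"
  by (simp add: axis_def if_distrib[of "\<lambda>x. x * _"] cong: if_cong)

lemma pdy_add:
  fixes f g :: "real^'n \<Rightarrow> real"
  assumes "f differentiable at v" "g differentiable at v"
  shows "pdy k (\<lambda>w. f w + g w) v = pdy k f v + pdy k g v"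
  using pdy_eq_derivative[OF has_derivative_add[OF assms[THEN has_derivative_pdy]]]
  by (simp add: sum_axis_mult)

lemma pdy_mult:
  fixes f g :: "real^'n \<Rightarrow> real"
  assumes "f differentiable at v" "g differentiable at v"
  shows "pdy k (\<lambda>w. f w * g w) v = pdy k f v * g v + f v * pdy k g v"
  using pdy_eq_derivative[OF has_derivative_mult[OF assms[THEN has_derivative_pdy]]]
  by (simp add: sum_axis_mult)

lemma pdy_cmult:
  fixes f :: "real^'n \<Rightarrow> real"
  assumes "f differentiable at v"
  shows "pdy k (\<lambda>w. c * f w) v = c * pdy k f v"
  using pdy_eq_derivative[OF has_derivative_mult_right[OF has_derivative_pdy[OF assms]]]
  by (simp add: sum_axis_mult)

lemma pdy_const: "pdy k (\<lambda>w. c) v = 0"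
  by (simp add: pdy_def dd_def)

lemma pdy_sum:
  fixes f :: "'a \<Rightarrow> real^'n \<Rightarrow> real"
  assumes "finite A" "\<And>j. j \<in> A \<Longrightarrow> f j differentiable at v"
  shows "pdy k (\<lambda>w. \<Sum>j\<in>A. f j w) v = (\<Sum>j\<in>A. pdy k (f j) v)"
  using pdy_eq_derivative[OF has_derivative_sum[OF has_derivative_pdy[OF assms(2)]]]
  by (simp add: sum_axis_mult)

lemma has_derivative_vec_nth: "((\<lambda>w::real^'n. w $ i) has_derivative (\<lambda>w. w $ i)) F"
  using bounded_linear_vec_nth by (rule bounded_linear.has_derivative) (rule has_derivative_ident)

lemma differentiable_vec_nth: "(\<lambda>w::real^'n. w $ j) differentiable at v"
  using has_derivative_vec_nth unfolding differentiable_def by blast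

lemma pdy_vec_nth: "pdy k (\<lambda>w::real^'n. w $ j) v = (if k = j then 1 else 0)"
  using pdy_eq_derivative[OF has_derivative_vec_nth[of j "at v"], of k] by (simp add: axis_def)

lemma pdy_linear: "pdy k (\<lambda>w. \<Sum>i\<in>UNIV. c $ i * w $ i) v = c $ k"
  by (simp add: pdy_sum pdy_cmult differentiable_vec_nth pdy_vec_nth if_distrib cong: if_cong)

lemma mixed_difference_mean_value:
  fixes f :: "real^'n \<Rightarrow> real"
  assumes r: "ball v r \<subseteq> S" and h: "0 < h" "2*h < r"
    and diff: "\<And>u. u \<in> S \<Longrightarrow> f differentiable at u"
    and diff_pdy: "\<And>u k. u \<in> S \<Longrightarrow> pdy k f differentiable at u"
  shows "\<exists>u. dist u v < 2*h \<and>
    f (v + h *\<^sub>R axis p 1 + h *\<^sub>R axis q 1) - f (v + h *\<^sub>R axis p 1) - f (v + h *\<^sub>R axis q 1) + f v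
      = h * h * pdy q (pdy p f) u"
proof -
  let ?a = "axis p 1 :: real^'n" and ?b = "axis q 1 :: real^'n"
  have inS: "v + s *\<^sub>R ?a + t *\<^sub>R ?b \<in> S" if "0 \<le> s" "s \<le> h" "0 \<le> t" "t \<le> h" for s t
  proof -
    have "norm (s *\<^sub>R ?a + t *\<^sub>R ?b) \<le> norm (s *\<^sub>R ?a) + norm (t *\<^sub>R ?b)" by (rule norm_triangle_ineq)
    also have "\<dots> = s + t" using that by simp
    finally have "dist (v + s *\<^sub>R ?a + t *\<^sub>R ?b) v < r" using that h by (simp add: dist_norm)
    then show ?thesis using r by (auto simp: dist_commute)
  qed
  define \<psi> where "\<psi> s = f ((v + h *\<^sub>R ?b) + s *\<^sub>R ?a) - f (v + s *\<^sub>R ?a)" for s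
  have psi_deriv: "(\<psi> has_real_derivative (pdy p f ((v + h *\<^sub>R ?b) + s *\<^sub>R ?a) - pdy p f (v + s *\<^sub>R ?a))) (at s)"
    if "0 \<le> s" "s \<le> h" for s
  proof -
    have m1: "(v + h *\<^sub>R ?b) + s *\<^sub>R ?a \<in> S" using inS[of s h] that h by (simp add: algebra_simps)
    have m2: "v + s *\<^sub>R ?a \<in> S" using inS[of s 0] that h by simp
    show ?thesis unfolding \<psi>_def pdy_def
      by (intro DERIV_diff has_real_derivative_along_line diff m1 m2)
  qed
  then obtain s1 where s1: "0 < s1" "s1 < h"
    "\<psi> h - \<psi> 0 = (h - 0) * (pdy p f ((v + h *\<^sub>R ?b) + s1 *\<^sub>R ?a) - pdy p f (v + s1 *\<^sub>R ?a))"
    using MVT2[OF h(1) psi_deriv] by auto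
  define \<phi> where "\<phi> t = pdy p f ((v + s1 *\<^sub>R ?a) + t *\<^sub>R ?b)" for t
  have phi_deriv: "(\<phi> has_real_derivative (pdy q (pdy p f) ((v + s1 *\<^sub>R ?a) + t *\<^sub>R ?b))) (at t)"
    if "0 \<le> t" "t \<le> h" for t
  proof -
    have m1: "(v + s1 *\<^sub>R ?a) + t *\<^sub>R ?b \<in> S" using inS[of s1 t] that s1 by simp
    show ?thesis unfolding \<phi>_def pdy_def[of q]
      using has_real_derivative_along_line[of "pdy p f" "v + s1 *\<^sub>R ?a" t ?b] diff_pdy[OF m1, of p] by simp
  qed
  then obtain t1 where t1: "0 < t1" "t1 < h"
    "\<phi> h - \<phi> 0 = (h - 0) * pdy q (pdy p f) ((v + s1 *\<^sub>R ?a) + t1 *\<^sub>R ?b)"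
    using MVT2[OF h(1) phi_deriv] by auto
  let ?u = "(v + s1 *\<^sub>R ?a) + t1 *\<^sub>R ?b"
  have "dist ?u v \<le> norm (s1 *\<^sub>R ?a) + norm (t1 *\<^sub>R ?b)"
    using norm_triangle_ineq[of "s1 *\<^sub>R ?a" "t1 *\<^sub>R ?b"] by (simp add: dist_norm)
  also have "\<dots> < 2*h" using s1 t1 by simp
  finally have du: "dist ?u v < 2*h" .
  have "\<psi> h - \<psi> 0 = h * (\<phi> h - \<phi> 0)" using s1(3) unfolding \<phi>_def by (simp add: algebra_simps)
  also have "\<dots> = h * h * pdy q (pdy p f) ?u" using t1(3) by simp
  finally have "\<psi> h - \<psi> 0 = h * h * pdy q (pdy p f) ?u" .
  moreover have "\<psi> h - \<psi> 0 = f (v + h *\<^sub>R ?a + h *\<^sub>R ?b) - f (v + h *\<^sub>R ?a) - f (v + h *\<^sub>R ?b) + f v"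
    unfolding \<psi>_def by (simp add: algebra_simps)
  ultimately show ?thesis using du by metis
qed

(* Both mixed partials equal h^-2 times the same mixed second difference up to an error
  that vanishes with h, by their continuity. *)
lemma pdy_commute:
  fixes f :: "real^'n \<Rightarrow> real"
  assumes S: "open S" "v \<in> S"
    and diff: "\<And>u. u \<in> S \<Longrightarrow> f differentiable at u"
    and diff_pdy: "\<And>u k. u \<in> S \<Longrightarrow> pdy k f differentiable at u"
    and cont: "\<And>u k m. u \<in> S \<Longrightarrow> continuous (at u) (pdy k (pdy m f))"
  shows "pdy i (pdy j f) v = pdy j (pdy i f) v"
proof (rule ccontr)
  let ?A = "pdy j (pdy i f) v" and ?B = "pdy i (pdy j f) v"
  assume ne: "?B \<noteq> ?A"
  define d where "d = \<bar>?A - ?B\<bar>"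
  have d: "d > 0" using ne unfolding d_def by simp
  obtain r where r: "r > 0" "ball v r \<subseteq> S" using S open_contains_ball by blast
  obtain e1 where e1: "e1 > 0" "\<And>u. dist u v < e1 \<Longrightarrow> dist (pdy j (pdy i f) u) ?A < d/2"
    using cont[OF S(2), of j i] d unfolding continuous_at_eps_delta by (metis half_gt_zero)
  obtain e2 where e2: "e2 > 0" "\<And>u. dist u v < e2 \<Longrightarrow> dist (pdy i (pdy j f) u) ?B < d/2"
    using cont[OF S(2), of i j] d unfolding continuous_at_eps_delta by (metis half_gt_zero)
  define h where "h = min r (min e1 e2) / 4"
  have h: "0 < h" "2*h < r" "2*h < e1" "2*h < e2" using r e1 e2 unfolding h_def by auto
  obtain u1 where u1: "dist u1 v < 2*h"
    "f (v + h *\<^sub>R axis i 1 + h *\<^sub>R axis j 1) - f (v + h *\<^sub>R axis i 1) - f (v + h *\<^sub>R axis j 1) + f v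
      = h * h * pdy j (pdy i f) u1"
    using mixed_difference_mean_value[OF r(2) h(1,2) diff diff_pdy, of i j] by blast
  obtain u2 where u2: "dist u2 v < 2*h"
    "f (v + h *\<^sub>R axis j 1 + h *\<^sub>R axis i 1) - f (v + h *\<^sub>R axis j 1) - f (v + h *\<^sub>R axis i 1) + f v
      = h * h * pdy i (pdy j f) u2"
    using mixed_difference_mean_value[OF r(2) h(1,2) diff diff_pdy, of j i] by blast
  have "v + h *\<^sub>R axis j 1 + h *\<^sub>R axis i 1 = v + h *\<^sub>R axis i 1 + h *\<^sub>R axis j 1"
    by (simp add: algebra_simps)
  then have "h * h * pdy j (pdy i f) u1 = h * h * pdy i (pdy j f) u2" using u1(2) u2(2) by (simp only:)
  then have eq: "pdy j (pdy i f) u1 = pdy i (pdy j f) u2" using h by simp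
  have "dist (pdy j (pdy i f) u1) ?A < d/2" using e1(2) u1(1) h by simp
  moreover have "dist (pdy i (pdy j f) u2) ?B < d/2" using e2(2) u2(1) h by simp
  ultimately have "\<bar>?A - ?B\<bar> < d" using eq unfolding dist_real_def by linarith
  then show False unfolding d_def by simp
qed

definition C3_off_origin :: "(real^'n::finite \<Rightarrow> real) \<Rightarrow> bool" where
  "C3_off_origin F \<longleftrightarrow> (\<forall>v. v \<noteq> 0 \<longrightarrow>
     F differentiable at v \<and> (\<forall>j. pdy j F differentiable at v) \<and>
     (\<forall>i j. pdy i (pdy j F) differentiable at v) \<and>
     (\<forall>k i j. pdy k (pdy i (pdy j F)) differentiable at v))"

lemma C3_off_originD:
  assumes "C3_off_origin F" "v \<noteq> 0"
  shows "F differentiable at v" "pdy j F differentiable at v"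
    "pdy i (pdy j F) differentiable at v" "pdy k (pdy i (pdy j F)) differentiable at v"
  using assms unfolding C3_off_origin_def by blast+

lemma Ck_Suc_differentiable_at:
  assumes "Ck (Suc k) S f" "open S" "p \<in> S"
  shows "f differentiable at p"
  using assms at_within_open[OF assms(3,2)] by (auto simp: differentiable_on_def)

lemma differentiable_at_Pair_right:
  fixes g :: "'a::real_normed_vector \<times> 'b::real_normed_vector \<Rightarrow> real"
  assumes "g differentiable at (x, v)"
  shows "(\<lambda>w. g (x, w)) differentiable at v"
  using differentiable_chain_at[OF differentiable_Pair[OF differentiable_const differentiable_ident] assms]
  by (simp add: o_def)

(* pdy j (L x) is the derivative of (x, y) |-> L x y along (0, axis j 1), restricted to the
  fibre over x, so the C^k hypotheses of finsler apply to it. *)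
lemma finsler_C3_off_origin:
  fixes L :: "real^'n::finite \<Rightarrow> real^'n \<Rightarrow> real"
  assumes "open U" "finsler U L" "x \<in> U"
  shows "C3_off_origin (L x)"
proof -
  let ?S = "U \<times> (UNIV - {0::real^'n})" and ?P = "\<lambda>(x, y). L x y"
  have S: "open ?S" using assms(1) by (intro open_Times) auto
  have P: "Ck k ?S ?P" for k using assms(2) unfolding finsler_def smooth_on_def by blast
  define e where "e j = ((0::real^'n), (axis j 1 :: real^'n))" for j
  have e: "e j \<in> Basis" for j unfolding e_def by (simp add: Basis_prod_def)
  have restrict: "pdy j (\<lambda>v. g (x, v)) = (\<lambda>v. dd (e j) g (x, v))"
    for j and g :: "(real^'n) \<times> (real^'n) \<Rightarrow> real"
    unfolding e_def pdy_def dd_def by simp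
  have fibre: "(\<lambda>v. g (x, v)) differentiable at v" if "Ck (Suc 0) ?S g" "v \<noteq> 0" for g v
    using that(2) assms(3)
    by (intro differentiable_at_Pair_right Ck_Suc_differentiable_at[OF that(1) S]) simp
  have "Ck (Suc 0) ?S ?P" "Ck (Suc 0) ?S (dd (e j) ?P)" "Ck (Suc 0) ?S (dd (e i) (dd (e j) ?P))"
    "Ck (Suc 0) ?S (dd (e k) (dd (e i) (dd (e j) ?P)))" for i j k
    using P[of 1] P[of 2] P[of 3] P[of 4] e by (simp_all add: numeral_eq_Suc)
  note fibre = this[THEN fibre]
  have "L x = (\<lambda>v. ?P (x, v))" by simp
  then show ?thesis
    unfolding C3_off_origin_def by (simp only: restrict) (blast intro: fibre)
qed

section \<open>Outer products and the Frobenius pairing\<close>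

definition outer :: "real^'n \<Rightarrow> real^'m \<Rightarrow> real^'m^'n" where
  "outer u v = (\<chi> i j. u$i * v$j)"

definition frob :: "real^'n^'m \<Rightarrow> real^'n^'m \<Rightarrow> real" where
  "frob A B = (\<Sum>j\<in>UNIV. \<Sum>k\<in>UNIV. A$j$k * B$j$k)"

lemma inner_vec_eq_sum: "u \<bullet> v = (\<Sum>i\<in>UNIV. u$i * (v::real^'n)$i)"
  by (simp add: inner_vec_def)

lemma matrix_vector_mult_nth: "(A *v v) $ i = (\<Sum>j\<in>UNIV. A$i$j * v$j)"
  by (simp add: matrix_vector_mult_def)

lemma outer_mult_vector: "outer u v *v x = (v \<bullet> x) *\<^sub>R u"
  by (simp add: vec_eq_iff matrix_vector_mult_nth outer_def inner_vec_eq_sum sum_distrib_left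
      algebra_simps)

lemma scaleR_matrix_vector_mult: "(c *\<^sub>R A) *v x = c *\<^sub>R (A *v (x::real^'n))"
  by (simp add: vec_eq_iff matrix_vector_mult_nth sum_distrib_left algebra_simps)

lemma sum_sum_eq_inner_matrix_vector:
  "(\<Sum>i\<in>UNIV. \<Sum>j\<in>UNIV. u$i * A$i$j * v$j) = u \<bullet> (A *v (v::real^'n))"
  by (simp add: inner_vec_eq_sum matrix_vector_mult_nth sum_distrib_left algebra_simps)

lemma inner_matrix_vector_transpose: "u \<bullet> (A *v v) = (transpose A *v u) \<bullet> (v::real^'n)"
  by (simp add: dot_lmul_matrix)

lemma inner_matrix_vector_symmetric:
  "transpose A = A \<Longrightarrow> u \<bullet> (A *v v) = (A *v u) \<bullet> (v::real^'n)"
  using inner_matrix_vector_transpose[of u A v] by simp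

lemma frob_outer_right: "frob A (outer u v) = u \<bullet> (A *v v)"
  by (simp add: frob_def outer_def inner_vec_eq_sum matrix_vector_mult_nth sum_distrib_left
      algebra_simps)

lemma frob_outer_left: "frob (outer u v) X = u \<bullet> (X *v v)"
  by (simp add: frob_def outer_def inner_vec_eq_sum matrix_vector_mult_nth sum_distrib_left
      algebra_simps)

lemma frob_add_left: "frob (A + B) X = frob A X + frob B X"
  and frob_diff_left: "frob (A - B) X = frob A X - frob B X"
  and frob_scaleR_left: "frob (c *\<^sub>R A) X = c * frob A X"
  and frob_add_right: "frob A (X + Y) = frob A X + frob A Y"
  and frob_scaleR_right: "frob A (c *\<^sub>R X) = c * frob A X"
  by (simp_all add: frob_def sum.distrib sum_subtractf sum_distrib_left algebra_simps)

lemma transpose_outer: "transpose (outer u v) = outer v u"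
  by (simp add: vec_eq_iff transpose_def outer_def)

lemma transpose_add: "transpose (A + B) = transpose A + transpose (B::real^'n^'m)"
  by (simp add: vec_eq_iff transpose_def)

lemma symmetric_matrix_nth: "transpose A = A \<Longrightarrow> A$i$j = A$j$i"
  by (metis transpose_def vec_lambda_beta)

lemma frob_inverse_symmetric:
  fixes G g :: "real^'n^'n"
  assumes "G ** g = mat 1" "transpose g = g"
  shows "frob G g = real CARD('n)"
proof -
  have "frob G g = (\<Sum>j\<in>UNIV. (G ** g) $ j $ j)"
    unfolding frob_def matrix_matrix_mult_def using symmetric_matrix_nth[OF assms(2)] by simp
  also have "\<dots> = real CARD('n)" using assms(1) by (simp add: mat_def)
  finally show ?thesis .
qed

lemma inverse_symmetric:
  fixes G g :: "real^'n^'n"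
  assumes "G ** g = mat 1" "g ** G = mat 1" "transpose g = g"
  shows "transpose G = G"
proof -
  have left: "transpose G ** g = mat 1"
    using assms(2,3) matrix_transpose_mul[of g G] by simp
  have "transpose G = transpose G ** (g ** G)" using assms(2) by simp
  also have "\<dots> = G" using left by (simp add: matrix_mul_assoc)
  finally show ?thesis .
qed

lemma matrix_inv_inverse:
  fixes A :: "real^'n^'n"
  assumes "invertible A"
  shows "matrix_inv A ** A = mat 1" "A ** matrix_inv A = mat 1"
proof -
  have "\<exists>A'. A ** A' = mat 1 \<and> A' ** A = mat 1" using assms unfolding invertible_def by blast
  then have "A ** matrix_inv A = mat 1 \<and> matrix_inv A ** A = mat 1"
    unfolding matrix_inv_def by (rule someI_ex)
  then show "matrix_inv A ** A = mat 1" "A ** matrix_inv A = mat 1" by auto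
qed

lemma positive_definite_invertible:
  fixes A :: "real^'n^'n"
  assumes pd: "\<And>w. w \<noteq> 0 \<Longrightarrow> (\<Sum>i\<in>UNIV. \<Sum>j\<in>UNIV. A$i$j * w$i * w$j) > 0"
  shows "invertible A"
proof -
  have "w = 0" if "A *v w = 0" for w
  proof (rule ccontr)
    assume "w \<noteq> 0"
    then have "0 < (\<Sum>i\<in>UNIV. \<Sum>j\<in>UNIV. w$i * A$i$j * w$j)" using pd by (simp add: mult_ac)
    with that show False by (simp add: sum_sum_eq_inner_matrix_vector)
  qed
  then have "inj ((*v) A)"
    by (intro injI) (metis eq_iff_diff_eq_0 matrix_vector_mult_diff_distrib)
  then show ?thesis using matrix_left_invertible_injective invertible_left_inverse by blast
qed

section \<open>Fundamental and Cartan tensors of a homogeneous function\<close>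

definition grad_vec :: "(real^'n \<Rightarrow> real) \<Rightarrow> real^'n \<Rightarrow> real^'n" where
  "grad_vec F v = (\<chi> i. pdy i F v)"

definition hess_mat :: "(real^'n \<Rightarrow> real) \<Rightarrow> real^'n \<Rightarrow> real^'n^'n" where
  "hess_mat F v = (\<chi> i j. pdy i (pdy j F) v)"

definition fundamental_tensor :: "(real^'n \<Rightarrow> real) \<Rightarrow> real^'n \<Rightarrow> real^'n^'n" where
  "fundamental_tensor F v = (\<chi> i j. (1/2) * pdy i (pdy j (\<lambda>u. (F u)^2)) v)"

definition cartan_tensor :: "(real^'n \<Rightarrow> real) \<Rightarrow> real^'n \<Rightarrow> 'n \<Rightarrow> real^'n^'n" where
  "cartan_tensor F v i = (\<chi> j k. (1/2) * pdy k (\<lambda>u. fundamental_tensor F u $ i $ j) v)"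

lemma open_punctured: "open (UNIV - {0::real^'n})"
  by auto

lemma pdy_power2:
  fixes f :: "real^'n \<Rightarrow> real"
  assumes "f differentiable at v"
  shows "pdy k (\<lambda>w. (f w)^2) v = 2 * f v * pdy k f v"
  using pdy_mult[OF assms assms, of k] by (simp add: power2_eq_square)

lemma fundamental_tensor_nth:
  assumes "C3_off_origin F" "v \<noteq> 0"
  shows "fundamental_tensor F v $ i $ j = pdy i F v * pdy j F v + F v * pdy i (pdy j F) v"
proof -
  note d = C3_off_originD[OF assms(1)]
  have "pdy i (pdy j (\<lambda>w. (F w)^2)) v = pdy i (\<lambda>u. 2 * (F u * pdy j F u)) v"
    using assms(2) d by (intro pdy_cong_open[OF open_punctured]) (auto simp: pdy_power2)
  also have "\<dots> = 2 * (pdy i F v * pdy j F v + F v * pdy i (pdy j F) v)"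
    using d[OF assms(2)] by (simp add: pdy_cmult pdy_mult)
  finally show ?thesis by (simp add: fundamental_tensor_def)
qed

lemma fundamental_tensor_eq:
  assumes "C3_off_origin F" "v \<noteq> 0"
  shows "fundamental_tensor F v = outer (grad_vec F v) (grad_vec F v) + F v *\<^sub>R hess_mat F v"
  by (simp add: vec_eq_iff fundamental_tensor_nth[OF assms] outer_def grad_vec_def hess_mat_def)

lemma cartan_tensor_nth:
  assumes "C3_off_origin F" "v \<noteq> 0"
  shows "cartan_tensor F v i $ j $ k = (1/2) *
    (pdy k (pdy i F) v * pdy j F v + pdy i F v * pdy k (pdy j F) v
      + pdy k F v * pdy i (pdy j F) v + F v * pdy k (pdy i (pdy j F)) v)"
proof -
  note d = C3_off_originD[OF assms(1)]
  have "pdy k (\<lambda>u. fundamental_tensor F u $ i $ j) v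
      = pdy k (\<lambda>u. pdy i F u * pdy j F u + F u * pdy i (pdy j F) u) v"
    using assms d by (intro pdy_cong_open[OF open_punctured]) (auto simp: fundamental_tensor_nth)
  also have "\<dots> = pdy k (pdy i F) v * pdy j F v + pdy i F v * pdy k (pdy j F) v
      + (pdy k F v * pdy i (pdy j F) v + F v * pdy k (pdy i (pdy j F)) v)"
    using d[OF assms(2)] by (simp add: pdy_add pdy_mult)
  finally show ?thesis by (simp add: cartan_tensor_def)
qed

locale homogeneous_C3 =
  fixes F :: "real^'n::finite \<Rightarrow> real"
  assumes C3: "C3_off_origin F"
    and homogeneous: "\<And>v t. 0 < t \<Longrightarrow> F (t *\<^sub>R v) = t * F v"
begin

lemmas differentiable = C3_off_originD[OF C3]

lemma euler: "v \<noteq> 0 \<Longrightarrow> (\<Sum>i\<in>UNIV. v$i * pdy i F v) = F v"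
proof -
  assume v: "v \<noteq> 0"
  have "((\<lambda>s. F (v + s *\<^sub>R v)) has_real_derivative dd v F v) (at 0)"
    using has_real_derivative_along_line[of F v 0 v] differentiable(1)[OF v] by simp
  moreover have "dd v F v = (\<Sum>i\<in>UNIV. v$i * pdy i F v)"
    using dd_eq_derivative[OF has_derivative_pdy[OF differentiable(1)[OF v]]] .
  moreover have "((\<lambda>s. F (v + s *\<^sub>R v)) has_real_derivative F v) (at 0)"
  proof (rule DERIV_cong_ev[THEN iffD1, OF refl _ refl])
    have "eventually (\<lambda>s. s \<in> {-1<..}) (nhds (0::real))"
      by (rule eventually_nhds_in_open) auto
    then show "eventually (\<lambda>s. (1 + s) * F v = F (v + s *\<^sub>R v)) (nhds 0)"
    proof (rule eventually_mono)
      fix s :: real assume "s \<in> {-1<..}"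
      then have "F ((1 + s) *\<^sub>R v) = (1 + s) * F v" by (intro homogeneous) simp
      then show "(1 + s) * F v = F (v + s *\<^sub>R v)" by (simp add: algebra_simps)
    qed
    show "((\<lambda>s. (1 + s) * F v) has_real_derivative F v) (at 0)"
      by (auto intro!: derivative_eq_intros)
  qed
  ultimately show ?thesis using DERIV_unique by metis
qed

lemma euler_pdy: "v \<noteq> 0 \<Longrightarrow> (\<Sum>j\<in>UNIV. v$j * pdy i (pdy j F) v) = 0"
proof -
  assume v: "v \<noteq> 0"
  have diff: "(\<lambda>u. u$j * pdy j F u) differentiable at v" for j
    by (intro differentiable_mult differentiable_vec_nth differentiable(2)[OF v])
  have "pdy i F v = pdy i (\<lambda>u. \<Sum>j\<in>UNIV. u$j * pdy j F u) v"
    using v diff by (intro pdy_cong_open[OF open_punctured]) (auto simp: euler)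
  also have "\<dots> = (\<Sum>j\<in>UNIV. (if i = j then 1 else 0) * pdy j F v + v$j * pdy i (pdy j F) v)"
    using diff differentiable(2)[OF v]
    by (simp add: pdy_sum pdy_mult[OF differentiable_vec_nth] pdy_vec_nth)
  also have "\<dots> = pdy i F v + (\<Sum>j\<in>UNIV. v$j * pdy i (pdy j F) v)"
    by (simp add: sum.distrib if_distrib[of "\<lambda>x. x * _"] cong: if_cong)
  finally show ?thesis by simp
qed

lemma euler_pdy_pdy:
  "v \<noteq> 0 \<Longrightarrow> (\<Sum>j\<in>UNIV. v$j * pdy k (pdy i (pdy j F)) v) = - pdy i (pdy k F) v"
proof -
  assume v: "v \<noteq> 0"
  have diff: "(\<lambda>u. u$j * pdy i (pdy j F) u) differentiable at v" for j
    by (intro differentiable_mult differentiable_vec_nth differentiable(3)[OF v])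
  have "0 = pdy k (\<lambda>u. \<Sum>j\<in>UNIV. u$j * pdy i (pdy j F) u) v"
    using v diff pdy_const[of k 0 v]
    by (subst pdy_cong_open[OF open_punctured]) (auto simp: euler_pdy)
  also have "\<dots> = (\<Sum>j\<in>UNIV. (if k = j then 1 else 0) * pdy i (pdy j F) v
      + v$j * pdy k (pdy i (pdy j F)) v)"
    using diff differentiable(3)[OF v]
    by (simp add: pdy_sum pdy_mult[OF differentiable_vec_nth] pdy_vec_nth)
  also have "\<dots> = pdy i (pdy k F) v + (\<Sum>j\<in>UNIV. v$j * pdy k (pdy i (pdy j F)) v)"
    by (simp add: sum.distrib if_distrib[of "\<lambda>x. x * _"] cong: if_cong)
  finally show ?thesis by simp
qed

lemma pdy_pdy_commute: "v \<noteq> 0 \<Longrightarrow> pdy i (pdy j F) v = pdy j (pdy i F) v"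
  and pdy_pdy_pdy_commute_outer: "v \<noteq> 0 \<Longrightarrow> pdy k (pdy i (pdy j F)) v = pdy i (pdy k (pdy j F)) v"
  by (rule pdy_commute[OF open_punctured];
      use differentiable in \<open>auto intro: differentiable_imp_continuous_within\<close>)+

lemma pdy_pdy_pdy_commute_inner:
  "v \<noteq> 0 \<Longrightarrow> pdy k (pdy i (pdy j F)) v = pdy k (pdy j (pdy i F)) v"
  using differentiable(3) pdy_pdy_commute
  by (intro pdy_cong_open[OF open_punctured]) auto

lemma grad_vec_inner_self: "v \<noteq> 0 \<Longrightarrow> grad_vec F v \<bullet> v = F v"
  using euler by (simp add: grad_vec_def inner_vec_eq_sum mult.commute)

lemma hess_mat_symmetric: "v \<noteq> 0 \<Longrightarrow> transpose (hess_mat F v) = hess_mat F v"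
  using pdy_pdy_commute by (simp add: vec_eq_iff transpose_def hess_mat_def)

lemma hess_mat_mult_self: "v \<noteq> 0 \<Longrightarrow> hess_mat F v *v v = 0"
  using euler_pdy by (simp add: vec_eq_iff hess_mat_def matrix_vector_mult_nth mult.commute)

lemma cartan_tensor_swap: "v \<noteq> 0 \<Longrightarrow> cartan_tensor F v i $ j $ k = cartan_tensor F v j $ i $ k"
  using C3 by (simp add: cartan_tensor_nth pdy_pdy_commute[of v i j] pdy_pdy_pdy_commute_inner[of v k i j]
      algebra_simps)

lemma euler_pdy_first: "v \<noteq> 0 \<Longrightarrow> (\<Sum>k\<in>UNIV. v$k * pdy k (pdy i F) v) = 0"
  using euler_pdy[of v i] pdy_pdy_commute by simp

lemma euler_pdy_pdy_first:
  "v \<noteq> 0 \<Longrightarrow> (\<Sum>k\<in>UNIV. v$k * pdy k (pdy i (pdy j F)) v) = - pdy i (pdy j F) v"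
  using euler_pdy_pdy[of v i j] pdy_pdy_pdy_commute_outer pdy_pdy_pdy_commute_inner pdy_pdy_commute
  by simp

lemma cartan_tensor_mult_self:
  assumes v: "v \<noteq> 0"
  shows "cartan_tensor F v i *v v = 0"
proof -
  have "(cartan_tensor F v i *v v) $ j = (1/2) *
      ((\<Sum>k\<in>UNIV. v$k * pdy k (pdy i F) v) * pdy j F v
        + pdy i F v * (\<Sum>k\<in>UNIV. v$k * pdy k (pdy j F) v)
        + (\<Sum>k\<in>UNIV. v$k * pdy k F v) * pdy i (pdy j F) v
        + F v * (\<Sum>k\<in>UNIV. v$k * pdy k (pdy i (pdy j F)) v))" for j
    using C3 v by (simp add: matrix_vector_mult_nth cartan_tensor_nth sum.distrib sum_distrib_left
        sum_distrib_right algebra_simps)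
  then show ?thesis
    using v by (simp add: vec_eq_iff euler euler_pdy_first euler_pdy_pdy_first)
qed

lemma cartan_tensor_transpose_mult_self:
  assumes v: "v \<noteq> 0"
  shows "transpose (cartan_tensor F v i) *v v = 0"
proof -
  have "(transpose (cartan_tensor F v i) *v v) $ k = (1/2) *
      (pdy k (pdy i F) v * (\<Sum>j\<in>UNIV. v$j * pdy j F v)
        + pdy i F v * (\<Sum>j\<in>UNIV. v$j * pdy k (pdy j F) v)
        + pdy k F v * (\<Sum>j\<in>UNIV. v$j * pdy i (pdy j F) v)
        + F v * (\<Sum>j\<in>UNIV. v$j * pdy k (pdy i (pdy j F)) v))" for k
    using C3 v by (simp add: matrix_vector_mult_nth transpose_def cartan_tensor_nth sum.distrib
        sum_distrib_left sum_distrib_right algebra_simps)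
  then show ?thesis
    using v by (simp add: vec_eq_iff euler euler_pdy euler_pdy_first euler_pdy_pdy pdy_pdy_commute[OF v])
qed

end

lemma finsler_homogeneous_C3:
  assumes "open U" "finsler U L" "x \<in> U"
  shows "homogeneous_C3 (L x)"
  using assms finsler_C3_off_origin by unfold_locales (auto simp: finsler_def)

lemma pdy_scale_plus_linear:
  assumes "F differentiable at v"
  shows "pdy j (\<lambda>w. e * F w + (\<Sum>r\<in>UNIV. b$r * w$r)) v = e * pdy j F v + b$j"
  using assms
  by (simp add: pdy_add pdy_cmult pdy_linear differentiable_vec_nth)

lemma
  assumes "C3_off_origin F" "v \<noteq> 0"
  shows pdy_pdy_scale_plus_linear:
      "pdy i (pdy j (\<lambda>w. e * F w + (\<Sum>r\<in>UNIV. b$r * w$r))) v = e * pdy i (pdy j F) v"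
    and pdy_pdy_pdy_scale_plus_linear:
      "pdy k (pdy i (pdy j (\<lambda>w. e * F w + (\<Sum>r\<in>UNIV. b$r * w$r)))) v
        = e * pdy k (pdy i (pdy j F)) v"
proof -
  note d = C3_off_originD[OF assms(1)]
  have "pdy i (pdy j (\<lambda>w. e * F w + (\<Sum>r\<in>UNIV. b$r * w$r))) u
      = pdy i (\<lambda>w. e * pdy j F w + b$j) u" if "u \<noteq> 0" for u i
    using that d by (intro pdy_cong_open[OF open_punctured]) (auto simp: pdy_scale_plus_linear)
  also have "\<dots> u i = e * pdy i (pdy j F) u" if "u \<noteq> 0" for u i
    using that d by (simp add: pdy_add pdy_cmult pdy_const)
  finally have second: "pdy i (pdy j (\<lambda>w. e * F w + (\<Sum>r\<in>UNIV. b$r * w$r))) u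
      = e * pdy i (pdy j F) u" if "u \<noteq> 0" for u i
    using that by blast
  then show "pdy i (pdy j (\<lambda>w. e * F w + (\<Sum>r\<in>UNIV. b$r * w$r))) v = e * pdy i (pdy j F) v"
    using assms(2) .
  have "pdy k (pdy i (pdy j (\<lambda>w. e * F w + (\<Sum>r\<in>UNIV. b$r * w$r)))) v
      = pdy k (\<lambda>w. e * pdy i (pdy j F) w) v"
    using assms(2) d second by (intro pdy_cong_open[OF open_punctured]) auto
  also have "\<dots> = e * pdy k (pdy i (pdy j F)) v"
    using d assms(2) by (simp add: pdy_cmult)
  finally show "pdy k (pdy i (pdy j (\<lambda>w. e * F w + (\<Sum>r\<in>UNIV. b$r * w$r)))) v
      = e * pdy k (pdy i (pdy j F)) v" .
qed

lemma grad_vec_scale_plus_linear: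
  assumes "F differentiable at v"
  shows "grad_vec (\<lambda>w. e * F w + (\<Sum>r\<in>UNIV. b$r * w$r)) v = e *\<^sub>R grad_vec F v + b"
  using pdy_scale_plus_linear[OF assms] by (simp add: vec_eq_iff grad_vec_def)

lemma hess_mat_scale_plus_linear:
  assumes "C3_off_origin F" "v \<noteq> 0"
  shows "hess_mat (\<lambda>w. e * F w + (\<Sum>r\<in>UNIV. b$r * w$r)) v = e *\<^sub>R hess_mat F v"
  using pdy_pdy_scale_plus_linear[OF assms] by (simp add: vec_eq_iff hess_mat_def)

lemma cartan_tensor_scale_plus_linear:
  fixes F :: "real^'n \<Rightarrow> real" and e :: real and b v :: "real^'n"
  defines "F' \<equiv> \<lambda>w. e * F w + (\<Sum>r\<in>UNIV. b$r * w$r)"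
    and "H \<equiv> hess_mat F v"
    and "m \<equiv> b - ((b \<bullet> v) / F v) *\<^sub>R grad_vec F v"
  assumes "C3_off_origin F" "C3_off_origin F'" "v \<noteq> 0" "F v \<noteq> 0"
  shows "cartan_tensor F' v i $ j $ k = e * F' v / F v * cartan_tensor F v i $ j $ k
    + e/2 * (H$k$i * m$j + H$k$j * m$i + H$i$j * m$k)"
proof -
  note d = C3_off_originD[OF assms(4) assms(6)]
  have "pdy j F' v = e * pdy j F v + b$j" for j
    unfolding F'_def using d(1) by (rule pdy_scale_plus_linear)
  moreover have "pdy i (pdy j F') v = e * pdy i (pdy j F) v" for i j
    unfolding F'_def using assms(4,6) by (rule pdy_pdy_scale_plus_linear)
  moreover have "pdy k (pdy i (pdy j F')) v = e * pdy k (pdy i (pdy j F)) v" for k i j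
    unfolding F'_def using assms(4,6) by (rule pdy_pdy_pdy_scale_plus_linear)
  moreover have "F' v = e * F v + b \<bullet> v"
    by (simp add: F'_def inner_vec_eq_sum)
  ultimately show ?thesis
    using assms(7)
    by (simp add: cartan_tensor_nth[OF assms(4,6)] cartan_tensor_nth[OF assms(5,6)] H_def m_def hess_mat_def
        grad_vec_def field_simps)
qed

section \<open>Linear algebra of the conformal beta-change at a point\<close>

(* F = L(x,y), l = (l_i), H is the y-Hessian of L and G = (g^ij). *)
locale fundamental_decomposition =
  fixes F :: real and l y :: "real^'n::finite" and H G :: "real^'n^'n"
  assumes F_pos: "0 < F"
    and H_symmetric: "transpose H = H" and H_mult_y: "H *v y = 0" and l_inner_y: "l \<bullet> y = F"
    and G_left_inverse: "G ** (outer l l + F *\<^sub>R H) = mat 1"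
    and G_right_inverse: "(outer l l + F *\<^sub>R H) ** G = mat 1"
begin

abbreviation g where "g \<equiv> outer l l + F *\<^sub>R H"

lemma g_symmetric: "transpose g = g"
  by (simp add: transpose_add transpose_scalar transpose_outer H_symmetric)

lemma G_symmetric: "transpose G = G"
  using G_left_inverse G_right_inverse g_symmetric by (rule inverse_symmetric)

lemma G_mult_l: "G *v l = (1/F) *\<^sub>R y"
proof -
  have "g *v y = F *\<^sub>R l"
    by (simp add: matrix_vector_mult_add_rdistrib scaleR_matrix_vector_mult outer_mult_vector
        H_mult_y inner_commute l_inner_y)
  then have "y = F *\<^sub>R (G *v l)"
    by (metis G_left_inverse matrix_vector_mul_assoc matrix_vector_mul_lid matrix_vector_mult_scaleR)
  then show ?thesis using F_pos by simp
qed

lemma l_inner_G: "l \<bullet> (G *v x) = (y \<bullet> x) / F"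
  using inner_matrix_vector_symmetric[OF G_symmetric, of l x] by (simp add: G_mult_l)

lemma H_mult_G: "H *v (G *v x) = (1/F) *\<^sub>R (x - ((y \<bullet> x) / F) *\<^sub>R l)"
proof -
  have "x = g *v (G *v x)" by (simp add: matrix_vector_mul_assoc G_right_inverse)
  also have "\<dots> = ((y \<bullet> x) / F) *\<^sub>R l + F *\<^sub>R (H *v (G *v x))"
    by (simp add: matrix_vector_mult_add_rdistrib scaleR_matrix_vector_mult outer_mult_vector
        l_inner_G)
  finally have "F *\<^sub>R (H *v (G *v x)) = x - ((y \<bullet> x) / F) *\<^sub>R l"
    by (simp add: algebra_simps)
  then have "(1/F) *\<^sub>R (F *\<^sub>R (H *v (G *v x))) = (1/F) *\<^sub>R (x - ((y \<bullet> x) / F) *\<^sub>R l)"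
    by simp
  then show ?thesis using F_pos by simp
qed

lemma frob_G_H: "frob G H = (real CARD('n) - 1) / F"
proof -
  have "real CARD('n) = frob G g"
    using frob_inverse_symmetric[OF G_left_inverse g_symmetric] by simp
  also have "\<dots> = 1 + F * frob G H"
    using F_pos by (simp add: frob_add_right frob_scaleR_right frob_outer_right G_mult_l
        l_inner_y inner_commute)
  finally show ?thesis using F_pos by (simp add: field_simps)
qed

end

(* e = exp (sigma x), F' = *L(x,y) and G' = *g^ij; l' = e l + b is the y-gradient of *L,
  m = (m_i) and m_up = (m^i). *)
locale beta_change = fundamental_decomposition F l y H G
    for F l and y :: "real^'n::finite" and H G +
  fixes e F' :: real and b :: "real^'n" and G' :: "real^'n^'n"
  assumes e_pos: "0 < e" and F'_eq: "F' = e * F + b \<bullet> y" and F'_pos: "0 < F'"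
    and G'_left_inverse:
      "G' ** (outer (e *\<^sub>R l + b) (e *\<^sub>R l + b) + (F' * e) *\<^sub>R H) = mat 1"
begin

abbreviation l' where "l' \<equiv> e *\<^sub>R l + b"
abbreviation g' where "g' \<equiv> outer l' l' + (F' * e) *\<^sub>R H"
abbreviation \<tau> where "\<tau> \<equiv> e * F' / F"
abbreviation m where "m \<equiv> b - ((b \<bullet> y) / F) *\<^sub>R l"
abbreviation m_up where "m_up \<equiv> G *v m"

lemma m_inner_y: "m \<bullet> y = 0"
  using F_pos by (simp add: inner_diff_left inner_commute[of y l] l_inner_y)

lemma l'_eq: "l' = (F' / F) *\<^sub>R l + m"
  using F_pos by (simp add: F'_eq algebra_simps add_divide_distrib)

lemma l'_inner_y: "l' \<bullet> y = F'"
  by (simp add: F'_eq inner_add_left l_inner_y)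

lemma G_mult_b: "G *v b = m_up + ((b \<bullet> y) / F^2) *\<^sub>R y"
  using F_pos by (simp add: matrix_vector_mult_diff_distrib matrix_vector_mult_scaleR G_mult_l
      power2_eq_square)

lemma l'_inner_G: "l' \<bullet> (G *v x) = (F' / F^2) * (y \<bullet> x) + m_up \<bullet> x"
proof -
  have "l' \<bullet> (G *v x) = (G *v l') \<bullet> x"
    by (rule inner_matrix_vector_symmetric[OF G_symmetric])
  also have "G *v l' = (e / F + (b \<bullet> y) / F^2) *\<^sub>R y + m_up"
    by (simp only: matrix_vector_right_distrib matrix_vector_mult_scaleR G_mult_l G_mult_b
        scaleR_add_left) simp
  also have "e / F + (b \<bullet> y) / F^2 = F' / F^2"
    using F_pos by (simp add: F'_eq field_simps power2_eq_square)
  finally show ?thesis by (simp add: inner_add_left)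
qed

lemma m_inner_G: "m \<bullet> (G *v x) = m_up \<bullet> x"
  by (rule inner_matrix_vector_symmetric[OF G_symmetric])

lemma l'_inner_m_up: "l' \<bullet> m_up = m \<bullet> m_up"
  using l'_inner_G[of m] m_inner_y by (simp add: inner_commute)

lemma H_mult_m_up: "H *v m_up = (1/F) *\<^sub>R m"
  using H_mult_G[of m] m_inner_y by (simp add: inner_commute)

lemma G'_eq:
  "G' = (1/\<tau>) *\<^sub>R G
    + (1/F'^2 - 1/(e*F'*F) + (m \<bullet> m_up)*F/(e*F'^3)) *\<^sub>R outer y y
    - (F/(e*F'^2)) *\<^sub>R (outer y m_up + outer m_up y)" (is "G' = ?M")
proof -
  \<comment> \<open>Opaque copies of m and m_up keep simp from distributing G over the difference m.\<close>
  define mv where "mv = m"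
  define w where "w = G *v mv"
  define p where "p = 1/F'^2 - 1/(e*F'*F) + (mv \<bullet> w)*F/(e*F'^3)"
  define q where "q = F/(e*F'^2)"
  have M: "?M *v x = (F/(e*F')) *\<^sub>R (G *v x) + (p * (y \<bullet> x) - q * (w \<bullet> x)) *\<^sub>R y
      - (q * (y \<bullet> x)) *\<^sub>R w" for x
    unfolding mv_def w_def p_def q_def
    by (simp add: matrix_vector_mult_add_rdistrib matrix_vector_mult_diff_rdistrib
        scaleR_matrix_vector_mult outer_mult_vector algebra_simps)
  have lM: "l' \<bullet> (?M *v x) = (F/(e*F')) * ((F' / F^2) * (y \<bullet> x) + w \<bullet> x)
      + (p * (y \<bullet> x) - q * (w \<bullet> x)) * F' - q * (y \<bullet> x) * (mv \<bullet> w)" for x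
    using l'_inner_G[of x] l'_inner_m_up l'_inner_y unfolding M
    by (simp add: mv_def w_def inner_add_right inner_diff_right)
  have HM: "H *v (?M *v x) = (F/(e*F')) *\<^sub>R ((1/F) *\<^sub>R (x - ((y \<bullet> x) / F) *\<^sub>R l))
      - (q * (y \<bullet> x)) *\<^sub>R ((1/F) *\<^sub>R mv)" for x
    using H_mult_m_up[folded mv_def w_def] unfolding M
    by (simp add: matrix_vector_right_distrib matrix_vector_mult_diff_distrib
        matrix_vector_mult_scaleR H_mult_G H_mult_y)
  have g': "g' *v z = (l' \<bullet> z) *\<^sub>R ((F' / F) *\<^sub>R l + mv) + (F' * e) *\<^sub>R (H *v z)" for z
    by (simp add: matrix_vector_mult_add_rdistrib scaleR_matrix_vector_mult outer_mult_vector
        mv_def flip: l'_eq)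
  have "g' *v (?M *v x) = x" for x
    unfolding g' lM HM using F_pos e_pos F'_pos
    by (simp add: vec_eq_iff p_def q_def field_simps power2_eq_square power3_eq_cube)
  then have "g' ** ?M = mat 1"
    by (simp add: matrix_eq matrix_vector_mul_assoc[symmetric])
  then have "G' ** (g' ** ?M) = G'"
    by (simp only: matrix_mul_rid)
  then show ?thesis
    by (simp only: matrix_mul_assoc G'_left_inverse matrix_mul_lid)
qed

lemma G'_mult_orthogonal:
  assumes "y \<bullet> x = 0"
  shows "G' *v x = (1/\<tau>) *\<^sub>R (G *v x) - (F/(e*F'^2) * (m_up \<bullet> x)) *\<^sub>R y"
  using assms
  by (simp add: G'_eq matrix_vector_mult_add_rdistrib matrix_vector_mult_diff_rdistrib
      scaleR_matrix_vector_mult outer_mult_vector algebra_simps)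

lemma quadratic_G'_orthogonal: "y \<bullet> x = 0 \<Longrightarrow> x \<bullet> (G' *v x) = (1/\<tau>) * (x \<bullet> (G *v x))"
  by (simp add: G'_mult_orthogonal inner_diff_right inner_commute)

lemma frob_G'_annihilating:
  assumes "A *v y = 0" "transpose A *v y = 0"
  shows "frob G' A = (1/\<tau>) * frob G A"
proof -
  have "y \<bullet> (A *v m_up) = 0"
    using assms(2) by (simp add: inner_matrix_vector_transpose)
  then show ?thesis
    using assms(1) by (simp add: G'_eq frob_add_left frob_diff_left frob_scaleR_left frob_outer_left)
qed

end

(* c i $ j $ k = C_ijk and c' i $ j $ k = *C_ijk, so c_trace = (c_i). *)
locale cartan_change = beta_change F l y H G e F' b G'
    for F l and y :: "real^'n::finite" and H G e F' b G' +
  fixes c c' :: "'n \<Rightarrow> real^'n^'n"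
  assumes c_swap: "c i $ j $ k = c j $ i $ k"
    and c_mult_y: "c i *v y = 0" and c_transpose_mult_y: "transpose (c i) *v y = 0"
    and c'_nth: "c' i $ j $ k = \<tau> * c i $ j $ k + e/2 * (H$k$i * m$j + H$k$j * m$i + H$i$j * m$k)"
begin

abbreviation c_trace where "c_trace \<equiv> \<chi> i. frob G (c i)"

lemma c'_eq:
  "c' i = \<tau> *\<^sub>R c i + (e/2) *\<^sub>R (outer m (H$i) + m$i *\<^sub>R H + outer (H$i) m)"
  using symmetric_matrix_nth[OF H_symmetric]
  by (simp add: vec_eq_iff c'_nth outer_def algebra_simps)

lemma frob_G'_outer_row:
  "frob G' (outer m (H$i)) = m$i / (\<tau> * F)" "frob G' (outer (H$i) m) = m$i / (\<tau> * F)"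
proof -
  have row_y: "H$i \<bullet> y = 0"
    using H_mult_y by (simp add: vec_eq_iff matrix_vector_mul_component)
  have "m \<bullet> (G *v H$i) = (H *v m_up) $ i"
    by (simp add: inner_matrix_vector_symmetric[OF G_symmetric] matrix_vector_mul_component
        inner_commute)
  then show "frob G' (outer m (H$i)) = m$i / (\<tau> * F)"
    using row_y m_inner_y
    by (simp add: frob_outer_right G'_mult_orthogonal inner_diff_right inner_commute H_mult_m_up)
  have "G' *v m = (1/\<tau>) *\<^sub>R m_up - (F/(e*F'^2) * (m_up \<bullet> m)) *\<^sub>R y"
    using m_inner_y by (simp add: G'_mult_orthogonal inner_commute)
  moreover have "H$i \<bullet> m_up = m$i / F"
    using H_mult_m_up by (simp add: matrix_vector_mul_component[symmetric])
  ultimately show "frob G' (outer (H$i) m) = m$i / (\<tau> * F)"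
    using row_y by (simp add: frob_outer_right inner_diff_right)
qed

lemma c_trace_change: "(\<chi> i. frob G' (c' i)) = c_trace + ((real CARD('n) + 1) / (2 * F')) *\<^sub>R m"
proof -
  have fH: "frob G' H = (1/\<tau>) * ((real CARD('n) - 1) / F)"
    using H_mult_y H_symmetric by (simp add: frob_G'_annihilating frob_G_H)
  have "frob G' (c' i) = \<tau> * ((1/\<tau>) * frob G (c i))
      + (e/2) * (m$i / (\<tau> * F) + m$i * ((1/\<tau>) * ((real CARD('n) - 1) / F)) + m$i / (\<tau> * F))"
    for i
    using c_mult_y c_transpose_mult_y
    by (simp add: c'_eq frob_add_right frob_scaleR_right frob_G'_outer_row frob_G'_annihilating fH)
  also have "\<dots> i = frob G (c i) + ((real CARD('n) + 1) / (2 * F')) * m$i" for i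
    using e_pos F'_pos F_pos by (simp add: field_simps)
  finally show ?thesis by (simp add: vec_eq_iff)
qed

lemma y_inner_c_trace: "y \<bullet> c_trace = 0"
proof -
  have contract: "(\<Sum>i\<in>UNIV. y$i * c i $ j $ k) = 0" for j k
  proof -
    have "(\<Sum>i\<in>UNIV. y$i * c i $ j $ k) = (transpose (c j) *v y) $ k"
      by (simp add: matrix_vector_mult_nth transpose_def c_swap[of _ j] mult.commute)
    then show ?thesis by (simp only: c_transpose_mult_y zero_index)
  qed
  have "y \<bullet> c_trace = (\<Sum>i\<in>UNIV. \<Sum>j\<in>UNIV. \<Sum>k\<in>UNIV. y$i * (G$j$k * c i $ j $ k))"
    by (simp add: inner_vec_eq_sum frob_def sum_distrib_left)
  also have "\<dots> = (\<Sum>j\<in>UNIV. \<Sum>i\<in>UNIV. \<Sum>k\<in>UNIV. y$i * (G$j$k * c i $ j $ k))"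
    by (rule sum.swap)
  also have "\<dots> = (\<Sum>j\<in>UNIV. \<Sum>k\<in>UNIV. \<Sum>i\<in>UNIV. y$i * (G$j$k * c i $ j $ k))"
    by (rule sum.cong[OF refl], rule sum.swap)
  also have "\<dots> = (\<Sum>j\<in>UNIV. \<Sum>k\<in>UNIV. G$j$k * (\<Sum>i\<in>UNIV. y$i * c i $ j $ k))"
    by (simp add: sum_distrib_left mult_ac)
  finally show ?thesis by (simp add: contract)
qed

lemma csq_change:
  "(\<chi> i. frob G' (c' i)) \<bullet> (G' *v (\<chi> i. frob G' (c' i)))
    = inverse \<tau> * (c_trace \<bullet> (G *v c_trace) + (real CARD('n) + 1) / F' *
        (c_trace \<bullet> (G *v b) + (real CARD('n) + 1) / (4 * F') * (m \<bullet> m_up)))"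
proof -
  define k where "k = (real CARD('n) + 1) / (2 * F')"
  have c_trace': "(\<chi> i. frob G' (c' i)) = c_trace + k *\<^sub>R m"
    by (simp add: c_trace_change k_def)
  have orth: "y \<bullet> (c_trace + k *\<^sub>R m) = 0"
    using y_inner_c_trace m_inner_y by (simp add: inner_add_right inner_commute)
  have quad: "(c_trace + k *\<^sub>R m) \<bullet> (G *v (c_trace + k *\<^sub>R m))
      = c_trace \<bullet> (G *v c_trace) + 2 * k * (c_trace \<bullet> m_up) + k^2 * (m \<bullet> m_up)"
    by (simp only: matrix_vector_right_distrib matrix_vector_mult_scaleR inner_add_left
        inner_add_right inner_scaleR_left inner_scaleR_right m_inner_G)
      (simp add: inner_commute power2_eq_square distrib_left)
  have "c_trace \<bullet> (G *v b) = c_trace \<bullet> m_up + ((b \<bullet> y) / F^2) * (c_trace \<bullet> y)"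
    by (simp only: G_mult_b inner_add_right inner_scaleR_right)
  then have Gb: "c_trace \<bullet> (G *v b) = c_trace \<bullet> m_up"
    using y_inner_c_trace by (simp add: inner_commute)
  show ?thesis
    unfolding c_trace' quadratic_G'_orthogonal[OF orth] quad Gb
    using F'_pos e_pos F_pos by (simp add: k_def field_simps power2_eq_square)
qed

end

section \<open>The conformal beta-change of a Finsler metric\<close>

lemma gmat_eq_fundamental_tensor: "gmat L x y = fundamental_tensor (L x) y"
  by (simp add: gmat_def gt_def fundamental_tensor_def)

lemma ct_eq_cartan_tensor: "ct L x y i j k = cartan_tensor (L x) y i $ j $ k"
  by (simp add: ct_def gt_def cartan_tensor_def fundamental_tensor_def)

lemma conf_beta_eq:
  "conf_beta \<sigma> b L x = (\<lambda>w. exp (\<sigma> x) * L x w + (\<Sum>i\<in>UNIV. b x $ i * w $ i))"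
  by (simp add: fun_eq_iff conf_beta_def betaf_def)

lemma finsler_gmat_invertible:
  assumes "finsler U L" "x \<in> U" "y \<noteq> 0"
  shows "invertible (gmat L x y)"
  using assms by (intro positive_definite_invertible) (auto simp: finsler_def gmat_def)

lemma cvec_eq_frob: "cvec L x y i = frob (matrix_inv (gmat L x y)) (cartan_tensor (L x) y i)"
  by (simp add: cvec_def frob_def ginv_def ct_eq_cartan_tensor)

lemma csq_eq_quadratic_form:
  "csq L x y = (\<chi> i. cvec L x y i) \<bullet> (matrix_inv (gmat L x y) *v (\<chi> i. cvec L x y i))"
  by (simp add: csq_def ginv_def flip: sum_sum_eq_inner_matrix_vector)

lemma cbeta_eq_inner:
  "cbeta b L x y = (\<chi> i. cvec L x y i) \<bullet> (matrix_inv (gmat L x y) *v b x)"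
  by (simp add: cbeta_def ginv_def flip: sum_sum_eq_inner_matrix_vector)

lemma msq_eq_quadratic_form:
  "msq b L x y = (\<chi> i. mvec b L x y i) \<bullet> (matrix_inv (gmat L x y) *v (\<chi> i. mvec b L x y i))"
  by (simp add: msq_def ginv_def mult_ac flip: sum_sum_eq_inner_matrix_vector)

lemma mvec_eq: "(\<chi> i. mvec b L x y i) = b x - ((b x \<bullet> y) / L x y) *\<^sub>R grad_vec (L x) y"
  by (simp add: vec_eq_iff mvec_def betaf_def inner_vec_eq_sum grad_vec_def)

lemma gmat_eq_decomposition:
  assumes "C3_off_origin (L x)" "y \<noteq> 0"
  shows "gmat L x y = outer (grad_vec (L x) y) (grad_vec (L x) y) + L x y *\<^sub>R hess_mat (L x) y"
  using fundamental_tensor_eq[OF assms] by (simp add: gmat_eq_fundamental_tensor)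

lemma gmat_conf_beta_eq_decomposition:
  fixes L :: "real^'n::finite \<Rightarrow> real^'n \<Rightarrow> real" and \<sigma> :: "real^'n \<Rightarrow> real"
    and b :: "real^'n \<Rightarrow> real^'n" and x y :: "real^'n"
  defines "l' \<equiv> exp (\<sigma> x) *\<^sub>R grad_vec (L x) y + b x"
  assumes "C3_off_origin (L x)" "C3_off_origin (conf_beta \<sigma> b L x)" "y \<noteq> 0"
  shows "gmat (conf_beta \<sigma> b L) x y
    = outer l' l' + (conf_beta \<sigma> b L x y * exp (\<sigma> x)) *\<^sub>R hess_mat (L x) y"
proof -
  have "grad_vec (conf_beta \<sigma> b L x) y = l'"
    unfolding conf_beta_eq l'_def using C3_off_originD(1)[OF assms(2,4)]
    by (rule grad_vec_scale_plus_linear)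
  moreover have "hess_mat (conf_beta \<sigma> b L x) y = exp (\<sigma> x) *\<^sub>R hess_mat (L x) y"
    unfolding conf_beta_eq using assms(2,4) by (rule hess_mat_scale_plus_linear)
  ultimately show ?thesis
    using gmat_eq_decomposition[of "conf_beta \<sigma> b L" x y, OF assms(3,4)] by simp
qed

lemma conf_beta_cartan_change:
  fixes L :: "real^'n::finite \<Rightarrow> real^'n \<Rightarrow> real"
  assumes U: "open U" and fL: "finsler U L" and fS: "finsler U (conf_beta \<sigma> b L)"
    and x: "x \<in> U" and y: "y \<noteq> 0"
  shows "cartan_change (L x y) (grad_vec (L x) y) y (hess_mat (L x) y) (matrix_inv (gmat L x y))
    (exp (\<sigma> x)) (conf_beta \<sigma> b L x y) (b x) (matrix_inv (gmat (conf_beta \<sigma> b L) x y))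
    (cartan_tensor (L x) y) (cartan_tensor (conf_beta \<sigma> b L x) y)"
proof -
  interpret L: homogeneous_C3 "L x" using finsler_homogeneous_C3[OF U fL x] .
  interpret S: homogeneous_C3 "conf_beta \<sigma> b L x" using finsler_homogeneous_C3[OF U fS x] .
  have L_pos: "0 < L x y" and S_pos: "0 < conf_beta \<sigma> b L x y"
    using fL fS x y by (auto simp: finsler_def)
  note inverse_L = matrix_inv_inverse[OF finsler_gmat_invertible[OF fL x y]]
  note inverse_S = matrix_inv_inverse[OF finsler_gmat_invertible[OF fS x y]]
  show ?thesis
  proof unfold_locales
    show "conf_beta \<sigma> b L x y = exp (\<sigma> x) * L x y + b x \<bullet> y"
      by (simp add: conf_beta_def betaf_def inner_vec_eq_sum)
    show "cartan_tensor (conf_beta \<sigma> b L x) y i $ j $ k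
      = exp (\<sigma> x) * conf_beta \<sigma> b L x y / L x y * cartan_tensor (L x) y i $ j $ k
        + exp (\<sigma> x) / 2 * (hess_mat (L x) y $ k $ i * (b x - (b x \<bullet> y / L x y) *\<^sub>R grad_vec (L x) y) $ j
          + hess_mat (L x) y $ k $ j * (b x - (b x \<bullet> y / L x y) *\<^sub>R grad_vec (L x) y) $ i
          + hess_mat (L x) y $ i $ j * (b x - (b x \<bullet> y / L x y) *\<^sub>R grad_vec (L x) y) $ k)"
      for i j k
      unfolding conf_beta_eq using L_pos
      by (intro cartan_tensor_scale_plus_linear L.C3 S.C3[unfolded conf_beta_eq] y) simp
  qed (use L_pos S_pos y inverse_L inverse_S gmat_eq_decomposition[of L x y, OF L.C3 y]
      gmat_conf_beta_eq_decomposition[OF L.C3 S.C3 y] L.hess_mat_symmetric L.hess_mat_mult_self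
      L.grad_vec_inner_self L.cartan_tensor_swap L.cartan_tensor_mult_self
      L.cartan_tensor_transpose_mult_self in auto)
qed

theorem lemma3:
  fixes U :: "(real^'n::finite) set"
    and L :: "real^'n \<Rightarrow> real^'n \<Rightarrow> real"
    and \<sigma> :: "real^'n \<Rightarrow> real"
    and b :: "real^'n \<Rightarrow> real^'n"
    and x y :: "real^'n"
  assumes "open U"
    and "finsler U L"
    and "smooth_on U \<sigma>"
    and "\<forall>i. smooth_on U (\<lambda>z. b z $ i)"
    and "finsler U (conf_beta \<sigma> b L)"
    and "x \<in> U" and "y \<noteq> 0"
  shows "let \<tau> = exp (\<sigma> x) * conf_beta \<sigma> b L x y / L x y in
         csq (conf_beta \<sigma> b L) x y
           = inverse \<tau> * (csq L x y
               + (real CARD('n) + 1) / conf_beta \<sigma> b L x y * Abeta \<sigma> b L x y)"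
proof -
  \<comment> \<open>Only the values of \<sigma> and b at x enter.\<close>
  interpret cartan_change "L x y" "grad_vec (L x) y" y "hess_mat (L x) y" "matrix_inv (gmat L x y)"
    "exp (\<sigma> x)" "conf_beta \<sigma> b L x y" "b x" "matrix_inv (gmat (conf_beta \<sigma> b L) x y)"
    "cartan_tensor (L x) y" "cartan_tensor (conf_beta \<sigma> b L x) y"
    using conf_beta_cartan_change[OF assms(1,2,5,6,7)] .
  show ?thesis
    unfolding Let_def Abeta_def csq_eq_quadratic_form cbeta_eq_inner msq_eq_quadratic_form mvec_eq
      cvec_eq_frob
    by (rule csq_change)
qed

end
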